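(* Let $k<m\le kn$ be positive integers and $I$ a single-category instance with $n$ agents, $m$ goods and cardinality constraint $k$. Let $\mathcal{A}^*=(A^*_1,\dots,A^*_n)$ be a utilitarian-optimal allocation and $R=\{i:|A^*_i|<k\}$, $T=\{i:|A^*_i|=k\}$. If $\sum_{i\in R\cup T}u_i(A^*_i)<1$, then $$\frac{\text{OPT-USW}(I)}{\max_{\mathcal{A}\in \mathcal{C}_k(I)}\text{USW}(\mathcal{A})}\le \frac{1+s}{1+\frac{ks^2}{m-1}},\qquad s=-1+\sqrt{1+\frac{m-1}{k}}.$$
   Context: Each agent $i$ has an additive utility function $u_i:2^M\to\mathbb{R}_{\ge 0}$ with $u_i(\emptyset)=0$ and $u_i(M)=1$. An allocation is a partition $(A_1,\dots,A_n)$ of $M$; it is cardinal if $|A_i|\le k$ for all $i$, and $\mathcal{C}_k(I)$ denotes the set of cardinal allocations. $\text{USW}(\mathcal{A})=\sum_i u_i(A_i)$; $\text{OPT-USW}(I)$ is the maximum of $\text{USW}$ over all allocations, attained by a utilitarian-optimal allocation. *)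

theory Defs
  imports Complex_Main
begin

definition bundle_util :: "(nat \<Rightarrow> nat \<Rightarrow> real) \<Rightarrow> nat \<Rightarrow> nat set \<Rightarrow> real" where
  "bundle_util u i S = (\<Sum>g\<in>S. u i g)"

definition is_allocation :: "nat \<Rightarrow> nat \<Rightarrow> (nat \<Rightarrow> nat set) \<Rightarrow> bool" where
  "is_allocation n m A \<longleftrightarrow>
     (\<forall>i<n. A i \<subseteq> {..<m}) \<and>
     (\<forall>i<n. \<forall>j<n. i \<noteq> j \<longrightarrow> A i \<inter> A j = {}) \<and>
     (\<Union>i<n. A i) = {..<m}"

definition is_cardinal :: "nat \<Rightarrow> nat \<Rightarrow> nat \<Rightarrow> (nat \<Rightarrow> nat set) \<Rightarrow> bool" where
  "is_cardinal n m k A \<longleftrightarrow> is_allocation n m A \<and> (\<forall>i<n. card (A i) \<le> k)"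

definition USW :: "nat \<Rightarrow> (nat \<Rightarrow> nat \<Rightarrow> real) \<Rightarrow> (nat \<Rightarrow> nat set) \<Rightarrow> real" where
  "USW n u A = (\<Sum>i<n. bundle_util u i (A i))"

definition OPT_USW :: "nat \<Rightarrow> nat \<Rightarrow> (nat \<Rightarrow> nat \<Rightarrow> real) \<Rightarrow> real" where
  "OPT_USW n m u = Max {USW n u A | A. is_allocation n m A}"

definition MAX_CARD_USW :: "nat \<Rightarrow> nat \<Rightarrow> nat \<Rightarrow> (nat \<Rightarrow> nat \<Rightarrow> real) \<Rightarrow> real" where
  "MAX_CARD_USW n m k u = Max {USW n u A | A. is_cardinal n m k A}"

definition is_util_optimal :: "nat \<Rightarrow> nat \<Rightarrow> (nat \<Rightarrow> nat \<Rightarrow> real) \<Rightarrow> (nat \<Rightarrow> nat set) \<Rightarrow> bool" where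
  "is_util_optimal n m u A \<longleftrightarrow> is_allocation n m A \<and>
     (\<forall>B. is_allocation n m B \<longrightarrow> USW n u B \<le> USW n u A)"

definition valid_instance :: "nat \<Rightarrow> nat \<Rightarrow> (nat \<Rightarrow> nat \<Rightarrow> real) \<Rightarrow> bool" where
  "valid_instance n m u \<longleftrightarrow>
     (\<forall>i<n. \<forall>g<m. u i g \<ge> 0) \<and> (\<forall>i<n. bundle_util u i {..<m} = 1)"

end

(*
  Let R be the agents whose bundle in the optimal allocation A has at most k goods, S < 1 their
  welfare, and \<omega>(g) the value of a good g for R, averaged with weights the free slots k - |A j|.
  Every other agent i keeps a best k-subset of A i, judged by u i - \<omega>, which retains at least
  the fraction k / |A i| of its excess value; the released goods fit into the free slots of R,
  and averaging over injections into these slots routes them so that R gains at least their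
  \<omega>-value.  Since \<omega> of the released bundles is at least 1 - S, a Cauchy-Schwarz estimate
  shows that the resulting cardinal allocation has welfare at least 1 + k X^2 / (m - 1), where
  X = OPT - 1; and (1 + X) / (1 + k X^2 / (m - 1)) is largest at X = s.
*)
theory Submission
  imports Defs "HOL-Library.FuncSet"
begin

section \<open>Averaging\<close>

lemma ex_le_average:
  fixes f :: "'a \<Rightarrow> real"
  assumes "finite A" "A \<noteq> {}"
  shows "\<exists>a\<in>A. real (card A) * f a \<le> sum f A"
proof (rule ccontr)
  assume "\<not> ?thesis"
  then have "(\<Sum>a\<in>A. sum f A) < (\<Sum>a\<in>A. real (card A) * f a)"
    using assms by (intro sum_strict_mono) auto
  then show False by (simp add: sum_distrib_left)
qed

lemma ex_ge_average:
  fixes f :: "'a \<Rightarrow> real"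
  assumes "finite A" "A \<noteq> {}"
  shows "\<exists>a\<in>A. sum f A \<le> real (card A) * f a"
  using ex_le_average[OF assms, of "\<lambda>a. - f a"] by (auto simp: sum_negf)

lemma ex_subset_card_sum_ge_average:
  fixes f :: "'a \<Rightarrow> real"
  assumes "finite A" "0 < k" "k \<le> card A"
  shows "\<exists>K\<subseteq>A. card K = k \<and> real k / real (card A) * sum f A \<le> sum f K"
  using assms
proof (induction "card A - k" arbitrary: A)
  case 0
  then show ?case by (intro exI[of _ A]) auto
next
  case (Suc d)
  then have "A \<noteq> {}" by auto
  then obtain x where x: "x \<in> A" and x_le: "real (card A) * f x \<le> sum f A"
    using ex_le_average[OF \<open>finite A\<close>] by blast
  have card_A: "card (A - {x}) = card A - 1" "real (card A) > 1"
    using x Suc by auto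
  have "d = card (A - {x}) - k" "finite (A - {x})" "k \<le> card (A - {x})"
    using Suc.hyps(2) Suc.prems card_A by auto
  then obtain K where K: "K \<subseteq> A - {x}" "card K = k"
    and K_ge: "real k / real (card A - 1) * sum f (A - {x}) \<le> sum f K"
    using Suc.hyps(1) \<open>0 < k\<close> card_A(1) by metis
  have avg_le: "sum f A / real (card A) \<le> (sum f A - f x) / (real (card A) - 1)"
    using x_le card_A(2) by (simp add: field_simps)
  have "real k / real (card A) * sum f A \<le> real k / (real (card A) - 1) * (sum f A - f x)"
    using mult_left_mono[OF avg_le, of "real k"] by simp
  also have "\<dots> = real k / real (card A - 1) * sum f (A - {x})"
    using x Suc.prems(1) card_A(2) by (simp add: sum_diff1)
  finally show ?case using K K_ge by auto
qed

lemma sum_le_sum_if_leave_one_out_le: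
  fixes z t :: "'a \<Rightarrow> real"
  assumes "1 < card S" "\<And>c. c \<in> S \<Longrightarrow> sum z S - z c \<le> (real (card S) - 1) * t c"
  shows "sum z S \<le> sum t S"
proof -
  have "(\<Sum>c\<in>S. sum z S - z c) \<le> (\<Sum>c\<in>S. (real (card S) - 1) * t c)"
    using assms(2) by (rule sum_mono)
  then have "(real (card S) - 1) * sum z S \<le> (real (card S) - 1) * sum t S"
    by (simp add: sum_subtractf sum_distrib_left sum_distrib_right algebra_simps)
  then show ?thesis
    using assms(1) by simp
qed

lemma ex_inj_assignment_ge_average:
  fixes v :: "'s \<Rightarrow> 'a \<Rightarrow> real"
  assumes "finite E" "finite S" "card E \<le> card S"
  shows "\<exists>\<tau>. inj_on \<tau> E \<and> \<tau> ` E \<subseteq> S \<and>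
    (\<Sum>g\<in>E. \<Sum>c\<in>S. v c g) \<le> real (card S) * (\<Sum>g\<in>E. v (\<tau> g) g)"
  using assms
proof (induction E arbitrary: S rule: finite_induct)
  case empty
  then show ?case by auto
next
  case (insert g0 E S)
  have "\<forall>c\<in>S. \<exists>\<tau>. inj_on \<tau> E \<and> \<tau> ` E \<subseteq> S - {c} \<and>
    (\<Sum>g\<in>E. \<Sum>c'\<in>S - {c}. v c' g) \<le> real (card (S - {c})) * (\<Sum>g\<in>E. v (\<tau> g) g)"
    using insert by (intro ballI insert.IH) auto
  then obtain \<tau> where \<tau>: "\<forall>c\<in>S. inj_on (\<tau> c) E \<and> \<tau> c ` E \<subseteq> S - {c} \<and>
    (\<Sum>g\<in>E. \<Sum>c'\<in>S - {c}. v c' g) \<le> real (card (S - {c})) * (\<Sum>g\<in>E. v (\<tau> c g) g)"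
    by (rule bchoice[elim_format]) blast
  define z where "z c = (\<Sum>g\<in>E. v c g)" for c
  define T where "T c = (\<Sum>g\<in>E. v (\<tau> c g) g)" for c
  have "sum z S \<le> sum T S"
  proof (cases "E = {}")
    case False
    then have "0 < card E"
      using insert.hyps(1) by (simp add: card_gt_0_iff)
    then have "1 < card S"
      using insert by simp
    then show ?thesis
    proof (rule sum_le_sum_if_leave_one_out_le)
      fix c assume "c \<in> S"
      have "(\<Sum>g\<in>E. \<Sum>c'\<in>S - {c}. v c' g) = sum z S - z c"
        using \<open>c \<in> S\<close> insert.prems by (simp add: z_def sum_diff1 sum.swap[of _ E] sum_subtractf)
      moreover have "real (card (S - {c})) = real (card S) - 1"
        using \<open>c \<in> S\<close> \<open>1 < card S\<close> insert.prems(1) by simp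
      ultimately show "sum z S - z c \<le> (real (card S) - 1) * T c"
        using bspec[OF \<tau> \<open>c \<in> S\<close>] by (simp add: T_def)
    qed
  qed (simp add: z_def T_def)
  have "S \<noteq> {}" using insert by auto
  then obtain c where c: "c \<in> S"
    and c_ge: "(\<Sum>c'\<in>S. v c' g0 + T c') \<le> real (card S) * (v c g0 + T c)"
    using ex_ge_average[OF insert.prems(1)] by blast
  define \<tau>' where "\<tau>' = (\<tau> c)(g0 := c)"
  have "inj_on \<tau>' (insert g0 E)" "\<tau>' ` insert g0 E \<subseteq> S"
    using bspec[OF \<tau> c] c insert.hyps(2) by (auto simp: \<tau>'_def inj_on_def)
  moreover have "(\<Sum>g\<in>insert g0 E. v (\<tau>' g) g) = v c g0 + T c"
    using insert.hyps by (auto simp: \<tau>'_def T_def intro!: sum.cong)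
  moreover have "(\<Sum>g\<in>insert g0 E. \<Sum>c\<in>S. v c g) \<le> (\<Sum>c'\<in>S. v c' g0 + T c')"
    using \<open>sum z S \<le> sum T S\<close> insert.hyps by (simp add: z_def sum.distrib sum.swap[of _ S])
  ultimately show ?case
    using c_ge by (intro exI[of _ \<tau>']) auto
qed

lemma ex_capacitated_assignment_ge_average:
  fixes u :: "'j \<Rightarrow> 'a \<Rightarrow> real" and s :: "'j \<Rightarrow> nat"
  assumes "finite E" "finite J" "card E \<le> (\<Sum>j\<in>J. s j)"
  shows "\<exists>\<sigma>. \<sigma> ` E \<subseteq> J \<and> (\<forall>j\<in>J. card {g\<in>E. \<sigma> g = j} \<le> s j) \<and>
    (\<Sum>j\<in>J. real (s j) * (\<Sum>g\<in>E. u j g)) \<le> real (\<Sum>j\<in>J. s j) * (\<Sum>g\<in>E. u (\<sigma> g) g)"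
proof -
  define slots where "slots = (SIGMA j:J. {..<s j})"
  have slots: "finite slots" "card slots = (\<Sum>j\<in>J. s j)"
    using assms(2) by (simp_all add: slots_def)
  obtain \<tau> where \<tau>: "inj_on \<tau> E" "\<tau> ` E \<subseteq> slots"
    and \<tau>_ge: "(\<Sum>g\<in>E. \<Sum>c\<in>slots. u (fst c) g) \<le> real (card slots) * (\<Sum>g\<in>E. u (fst (\<tau> g)) g)"
    using ex_inj_assignment_ge_average[OF assms(1) slots(1), where v = "\<lambda>c g. u (fst c) g"]
      assms(3) slots(2) by auto
  have "card {g\<in>E. fst (\<tau> g) = j} \<le> s j" for j
  proof -
    have "inj_on \<tau> {g\<in>E. fst (\<tau> g) = j}" "\<tau> ` {g\<in>E. fst (\<tau> g) = j} \<subseteq> {j} \<times> {..<s j}"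
      using \<tau> by (auto simp: slots_def inj_on_def)
    then show ?thesis using card_inj_on_le[of \<tau> _ "{j} \<times> {..<s j}"] by simp
  qed
  moreover have "(\<Sum>c\<in>slots. u (fst c) g) = (\<Sum>j\<in>J. real (s j) * u j g)" for g
    using sum.Sigma[OF assms(2), of "\<lambda>j. {..<s j}" "\<lambda>j l. u j g"] by (simp add: slots_def split_def)
  then have "(\<Sum>g\<in>E. \<Sum>c\<in>slots. u (fst c) g) = (\<Sum>j\<in>J. real (s j) * (\<Sum>g\<in>E. u j g))"
    by (simp add: sum.swap[of _ E] sum_distrib_left)
  ultimately show ?thesis
    using \<tau> \<tau>_ge slots(2) by (intro exI[of _ "fst \<circ> \<tau>"]) (auto simp: slots_def)
qed

section \<open>Real inequalities\<close>

lemma sum_div_ge_square_div: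
  fixes y a :: "'i \<Rightarrow> real"
  assumes "\<And>i. i \<in> I \<Longrightarrow> 0 \<le> y i" "\<And>i. i \<in> I \<Longrightarrow> 0 < a i"
    and "(\<Sum>i\<in>I. a i * y i) \<le> Q" "0 < Q"
  shows "(\<Sum>i\<in>I. y i)\<^sup>2 / Q \<le> (\<Sum>i\<in>I. y i / a i)"
proof -
  define t where "t = (\<Sum>i\<in>I. y i) / Q"
  have pointwise: "2 * t * y i - t\<^sup>2 * (a i * y i) \<le> y i / a i" if "i \<in> I" for i
  proof -
    have "y i / a i - (2 * t * y i - t\<^sup>2 * (a i * y i)) = y i * (1 - t * a i)\<^sup>2 / a i"
      using assms(2)[OF that] by (simp add: field_simps power2_eq_square)
    also have "\<dots> \<ge> 0"
      using assms(1,2)[OF that] by simp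
    finally show ?thesis by simp
  qed
  have "(\<Sum>i\<in>I. 2 * t * y i - t\<^sup>2 * (a i * y i)) \<le> (\<Sum>i\<in>I. y i / a i)"
    using pointwise by (rule sum_mono)
  then have "2 * t * (\<Sum>i\<in>I. y i) - t\<^sup>2 * (\<Sum>i\<in>I. a i * y i) \<le> (\<Sum>i\<in>I. y i / a i)"
    by (simp add: sum_subtractf sum_distrib_left)
  moreover have "t\<^sup>2 * (\<Sum>i\<in>I. a i * y i) \<le> t\<^sup>2 * Q"
    using assms(3) by (simp add: mult_left_mono)
  moreover have "2 * t * (\<Sum>i\<in>I. y i) - t\<^sup>2 * Q = (\<Sum>i\<in>I. y i)\<^sup>2 / Q"
    using assms(4) by (simp add: t_def field_simps power2_eq_square)
  ultimately show ?thesis by linarith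
qed

lemma one_plus_div_one_plus_square_le:
  fixes q s x :: real
  assumes "0 < q" "0 \<le> 1 + s" "q * s\<^sup>2 + 2 * q * s = 1"
  shows "(1 + x) * (1 + q * s\<^sup>2) \<le> (1 + s) * (1 + q * x\<^sup>2)"
proof -
  have "(1 + s) * (1 + q * x\<^sup>2) - (1 + x) * (1 + q * s\<^sup>2)
      = q * (1 + s) * (x - s)\<^sup>2 + (s - x) * (1 - (q * s\<^sup>2 + 2 * q * s))"
    by (simp add: power2_eq_square algebra_simps)
  also have "\<dots> = q * (1 + s) * (x - s)\<^sup>2"
    using assms(3) by simp
  also have "\<dots> \<ge> 0"
    using assms(1,2) by (intro mult_nonneg_nonneg) simp_all
  finally show ?thesis by linarith
qed

lemma ratio_le_sqrt_bound:
  fixes a b x c :: real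
  assumes "0 < a" "0 < b" "0 \<le> 1 + x" "1 + a * x\<^sup>2 / b \<le> c"
  shows "(1 + x) / c \<le> (let s = -1 + sqrt (1 + b / a) in (1 + s) / (1 + a * s\<^sup>2 / b))"
proof -
  define q where "q = a / b"
  define s where "s = -1 + sqrt (1 + b / a)"
  have "0 < q"
    using assms(1,2) by (simp add: q_def)
  have "1 + s = sqrt (1 + b / a)" "0 \<le> 1 + b / a"
    using assms(1,2) by (simp_all add: s_def)
  then have "0 \<le> 1 + s" "q * (1 + s)\<^sup>2 = q + 1"
    using assms(1,2) by (simp_all add: q_def field_simps)
  then have key: "q * s\<^sup>2 + 2 * q * s = 1"
    by (simp add: power2_eq_square algebra_simps)
  have "0 < 1 + q * x\<^sup>2" "0 < 1 + q * s\<^sup>2"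
    using \<open>0 < q\<close> by (simp_all add: add_pos_nonneg)
  have "(1 + x) / c \<le> (1 + x) / (1 + q * x\<^sup>2)"
    using assms(3,4) \<open>0 < 1 + q * x\<^sup>2\<close> by (intro divide_left_mono) (simp_all add: q_def)
  also have "\<dots> \<le> (1 + s) / (1 + q * s\<^sup>2)"
    using one_plus_div_one_plus_square_le[OF \<open>0 < q\<close> \<open>0 \<le> 1 + s\<close> key, of x]
      \<open>0 < 1 + q * x\<^sup>2\<close> \<open>0 < 1 + q * s\<^sup>2\<close> by (simp add: divide_le_eq le_divide_eq mult.commute)
  finally show ?thesis
    by (simp add: s_def q_def Let_def)
qed

lemma truncated_welfare_ge_normalized:
  fixes v w a :: "'i \<Rightarrow> real" and S k Q :: real
  assumes "0 < k"
    and bounds: "\<And>i. i \<in> L \<Longrightarrow> 0 \<le> w i \<and> w i \<le> v i \<and> v i \<le> 1 \<and> k + 1 \<le> a i"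
    and w_eq: "(\<Sum>i\<in>L. w i) = 1 - S"
    and a_le: "(\<Sum>i\<in>L. a i) - (k + 1) * (1 - S) \<le> Q" and "0 < Q"
  shows "1 + k * (S + (\<Sum>i\<in>L. v i) - 1)\<^sup>2 / Q \<le> S + (\<Sum>i\<in>L. w i + k * ((v i - w i) / a i))"
proof -
  have a_pos: "0 < a i" if "i \<in> L" for i
    using bounds[OF that] \<open>0 < k\<close> by linarith
  have "a i * (v i - w i) \<le> a i - (k + 1) * w i" if "i \<in> L" for i
  proof -
    have "a i * (v i - w i) \<le> a i * (1 - w i)"
      using bounds[OF that] a_pos[OF that] by simp
    also have "\<dots> \<le> a i - (k + 1) * w i"
      using mult_right_mono[of "k + 1" "a i" "w i"] bounds[OF that] by (simp add: algebra_simps)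
    finally show ?thesis .
  qed
  then have "(\<Sum>i\<in>L. a i * (v i - w i)) \<le> (\<Sum>i\<in>L. a i - (k + 1) * w i)"
    by (rule sum_mono)
  also have "\<dots> \<le> Q"
    using a_le w_eq by (simp add: sum_subtractf sum_distrib_left[symmetric])
  finally have "(\<Sum>i\<in>L. v i - w i)\<^sup>2 / Q \<le> (\<Sum>i\<in>L. (v i - w i) / a i)"
    using sum_div_ge_square_div[of L "\<lambda>i. v i - w i" a Q] bounds a_pos \<open>0 < Q\<close> by force
  moreover have "(\<Sum>i\<in>L. v i - w i) = S + (\<Sum>i\<in>L. v i) - 1"
    using w_eq by (simp add: sum_subtractf)
  ultimately have "k * ((S + (\<Sum>i\<in>L. v i) - 1)\<^sup>2 / Q) \<le> k * (\<Sum>i\<in>L. (v i - w i) / a i)"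
    using \<open>0 < k\<close> by (intro mult_left_mono) simp_all
  then show ?thesis
    using w_eq by (simp add: sum.distrib sum_distrib_left)
qed

lemma truncated_welfare_ge:
  fixes v w a :: "'i \<Rightarrow> real" and S k Q :: real
  assumes "S < 1" "0 < k"
    and bounds: "\<And>i. i \<in> L \<Longrightarrow> 0 \<le> w i \<and> w i \<le> v i \<and> v i \<le> 1 \<and> k + 1 \<le> a i"
    and w_ge: "1 - S \<le> (\<Sum>i\<in>L. w i)"
    and a_le: "(\<Sum>i\<in>L. a i) - (k + 1) * (1 - S) \<le> Q" and "0 < Q"
  shows "1 + k * (S + (\<Sum>i\<in>L. v i) - 1)\<^sup>2 / Q \<le> S + (\<Sum>i\<in>L. w i + k / a i * (v i - w i))"
proof -
  define \<theta> where "\<theta> = (1 - S) / (\<Sum>i\<in>L. w i)"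
  have \<theta>: "0 \<le> \<theta>" "\<theta> \<le> 1"
    using w_ge \<open>S < 1\<close> by (auto simp: \<theta>_def)
  have \<theta>w: "0 \<le> \<theta> * w i" "\<theta> * w i \<le> w i" if "i \<in> L" for i
    using bounds[OF that] \<theta> by (auto simp: mult_left_le_one_le)
  have \<theta>w_bounds: "0 \<le> \<theta> * w i \<and> \<theta> * w i \<le> v i \<and> v i \<le> 1 \<and> k + 1 \<le> a i"
    if "i \<in> L" for i
    using bounds[OF that] \<theta>w[OF that] by (meson order_trans)
  have "(\<Sum>i\<in>L. \<theta> * w i) = \<theta> * (\<Sum>i\<in>L. w i)"
    by (simp add: sum_distrib_left)
  then have sum_\<theta>w: "(\<Sum>i\<in>L. \<theta> * w i) = 1 - S"
    using w_ge \<open>S < 1\<close> by (simp add: \<theta>_def)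
  have "1 + k * (S + (\<Sum>i\<in>L. v i) - 1)\<^sup>2 / Q
      \<le> S + (\<Sum>i\<in>L. \<theta> * w i + k * ((v i - \<theta> * w i) / a i))"
    by (rule truncated_welfare_ge_normalized[OF \<open>0 < k\<close> \<theta>w_bounds sum_\<theta>w a_le \<open>0 < Q\<close>])
  also have "\<dots> \<le> S + (\<Sum>i\<in>L. w i + k / a i * (v i - w i))"
  proof (intro add_left_mono sum_mono)
    fix i assume "i \<in> L"
    then have "0 < a i" "k / a i \<le> 1"
      using bounds[of i] \<open>0 < k\<close> by auto
    then have "0 \<le> (w i - \<theta> * w i) * (1 - k / a i)"
      using \<theta>w[OF \<open>i \<in> L\<close>] by simp
    also have "\<dots> = w i + k / a i * (v i - w i) - (\<theta> * w i + k * ((v i - \<theta> * w i) / a i))"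
      using \<open>0 < a i\<close> by (simp add: field_simps)
    finally show "\<theta> * w i + k * ((v i - \<theta> * w i) / a i) \<le> w i + k / a i * (v i - w i)"
      by simp
  qed
  finally show ?thesis .
qed

section \<open>Allocations\<close>

lemma allocation_finite:
  "is_allocation n m A \<Longrightarrow> i < n \<Longrightarrow> finite (A i)"
  unfolding is_allocation_def by (meson finite_lessThan finite_subset)

lemma allocation_disjoint:
  "is_allocation n m A \<Longrightarrow> i < n \<Longrightarrow> j < n \<Longrightarrow> g \<in> A i \<Longrightarrow> g \<in> A j \<Longrightarrow> i = j"
  unfolding is_allocation_def by blast

lemma allocation_sum_bundle_util:
  assumes "is_allocation n m A"
  shows "(\<Sum>i<n. bundle_util u j (A i)) = bundle_util u j {..<m}"
proof -
  have "bundle_util u j {..<m} = sum (u j) (\<Union>i<n. A i)"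
    using assms by (simp add: is_allocation_def bundle_util_def)
  also have "\<dots> = (\<Sum>i<n. sum (u j) (A i))"
    using assms by (intro sum.UNION_disjoint) (auto simp: allocation_finite is_allocation_def)
  finally show ?thesis unfolding bundle_util_def by simp
qed

lemma allocation_sum_card:
  assumes "is_allocation n m A"
  shows "(\<Sum>i<n. card (A i)) = m"
proof -
  have "m = card (\<Union>i<n. A i)"
    using assms by (simp add: is_allocation_def)
  also have "\<dots> = (\<Sum>i<n. card (A i))"
    using assms by (intro card_UN_disjoint) (auto simp: allocation_finite is_allocation_def)
  finally show ?thesis by simp
qed

lemma allocation_move_good:
  assumes "is_allocation n m A" "i < n" "j < n" "g \<in> A i"
  shows "is_allocation n m (A(i := A i - {g}, j := insert g (A j)))"
proof -
  define B where "B = A(i := A i - {g}, j := insert g (A j))"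
  have mem: "x \<in> B l \<longleftrightarrow> (if x = g then l = j else x \<in> A l)" if "l < n" for x l
    using assms that allocation_disjoint[OF assms(1)] by (auto simp: B_def)
  have A: "\<forall>l<n. A l \<subseteq> {..<m}" "\<forall>l<n. \<forall>l'<n. l \<noteq> l' \<longrightarrow> A l \<inter> A l' = {}"
    "(\<Union>l<n. A l) = {..<m}"
    using assms(1) by (simp_all add: is_allocation_def)
  have "g < m"
    using A(1) assms(2,4) by blast
  have sub: "\<forall>l<n. B l \<subseteq> {..<m}"
  proof (intro allI impI subsetI)
    fix l x assume "l < n" "x \<in> B l"
    then show "x \<in> {..<m}"
      using mem[of l x] A(1) \<open>g < m\<close> by (auto split: if_splits)
  qed
  have "\<forall>l<n. \<forall>l'<n. l \<noteq> l' \<longrightarrow> B l \<inter> B l' = {}"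
  proof (intro allI impI equals0I)
    fix l l' x assume "l < n" "l' < n" "l \<noteq> l'" "x \<in> B l \<inter> B l'"
    then show False
      using mem[of l x] mem[of l' x] A(2) by (auto split: if_splits)
  qed
  moreover have "{..<m} \<subseteq> (\<Union>l<n. B l)"
  proof
    fix x assume "x \<in> {..<m}"
    then obtain l where "l < n" "x \<in> A l"
      using A(3) by blast
    then show "x \<in> (\<Union>l<n. B l)"
      using mem[of l x] mem[of j x] assms(3) by (cases "x = g") auto
  qed
  ultimately show ?thesis
    using sub unfolding is_allocation_def B_def by blast
qed

lemma USW_move_good:
  assumes "is_allocation n m A" "i < n" "j < n" "i \<noteq> j" "g \<in> A i"
  shows "USW n u (A(i := A i - {g}, j := insert g (A j))) = USW n u A - u i g + u j g"
proof -
  have "g \<notin> A j"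
    using assms allocation_disjoint by metis
  then have "bundle_util u l ((A(i := A i - {g}, j := insert g (A j))) l) =
      bundle_util u l (A l) - (if l = i then u i g else 0) + (if l = j then u j g else 0)" for l
    using assms allocation_finite[OF assms(1)]
    by (auto simp: bundle_util_def sum_diff1)
  then show ?thesis
    using assms by (simp add: USW_def sum.distrib sum_subtractf)
qed

lemma util_optimal_dominance:
  assumes "is_util_optimal n m u A" "i < n" "j < n" "g \<in> A i"
  shows "u j g \<le> u i g"
proof (cases "i = j")
  case False
  have "is_allocation n m A"
    using assms(1) by (simp add: is_util_optimal_def)
  then have "USW n u (A(i := A i - {g}, j := insert g (A j))) \<le> USW n u A"
    using assms allocation_move_good by (metis is_util_optimal_def)
  then show ?thesis
    using USW_move_good[OF \<open>is_allocation n m A\<close> assms(2,3) False assms(4)] by simp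
qed simp

lemma finite_USW_allocations: "finite {USW n u A | A. is_allocation n m A}"
proof (rule finite_subset)
  show "{USW n u A | A. is_allocation n m A} \<subseteq> USW n u ` (\<Pi>\<^sub>E i\<in>{..<n}. Pow {..<m})"
  proof clarify
    fix A assume "is_allocation n m A"
    then have "restrict A {..<n} \<in> (\<Pi>\<^sub>E i\<in>{..<n}. Pow {..<m})"
      by (auto simp: is_allocation_def)
    moreover have "USW n u A = USW n u (restrict A {..<n})"
      by (simp add: USW_def)
    ultimately show "USW n u A \<in> USW n u ` (\<Pi>\<^sub>E i\<in>{..<n}. Pow {..<m})" by blast
  qed
qed (simp add: finite_PiE)

lemma OPT_USW_eq:
  assumes "is_util_optimal n m u A"
  shows "OPT_USW n m u = USW n u A"
  unfolding OPT_USW_def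
  using assms finite_USW_allocations by (intro Max_eqI) (auto simp: is_util_optimal_def)

lemma USW_le_MAX_CARD_USW:
  assumes "is_cardinal n m k B"
  shows "USW n u B \<le> MAX_CARD_USW n m k u"
proof -
  have "finite {USW n u A | A. is_cardinal n m k A}"
    by (rule finite_subset[OF _ finite_USW_allocations]) (auto simp: is_cardinal_def)
  then show ?thesis
    unfolding MAX_CARD_USW_def using assms by (intro Max_ge) auto
qed

lemma util_optimal_USW_ge_1:
  assumes "valid_instance n m u" "is_util_optimal n m u A" "0 < n"
  shows "1 \<le> USW n u A"
proof -
  have alloc: "is_allocation n m A"
    using assms(2) by (simp add: is_util_optimal_def)
  have "1 = (\<Sum>i<n. bundle_util u 0 (A i))"
    using assms(1,3) allocation_sum_bundle_util[OF alloc] by (simp add: valid_instance_def)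
  also have "\<dots> \<le> USW n u A"
    unfolding USW_def bundle_util_def
    using util_optimal_dominance[OF assms(2)] assms(3) by (intro sum_mono) auto
  finally show ?thesis .
qed

section \<open>Releasing and rerouting goods\<close>

locale release =
  fixes n m :: nat and A K :: "nat \<Rightarrow> nat set" and L :: "nat set"
  assumes allocation: "is_allocation n m A" and L_subset: "L \<subseteq> {..<n}"
    and K_subset: "\<And>i. i \<in> L \<Longrightarrow> K i \<subseteq> A i"
begin

definition released :: "nat set" where
  "released = (\<Union>i\<in>L. A i - K i)"

definition kept :: "nat \<Rightarrow> nat set" where
  "kept i = (if i \<in> L then K i else A i)"

lemma finite_L: "finite L"
  using L_subset by (rule finite_subset) simp

lemma finite_bundle: "i \<in> L \<Longrightarrow> finite (A i)"
  using L_subset allocation_finite[OF allocation] by blast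

lemma kept_subset: "kept i \<subseteq> A i"
  using K_subset by (simp add: kept_def)

lemma released_subset: "released \<subseteq> {..<m}"
  using allocation L_subset by (auto simp: released_def is_allocation_def)

lemma released_disjoint_kept:
  assumes "i < n"
  shows "released \<inter> kept i = {}"
proof (intro equals0I)
  fix x assume "x \<in> released \<inter> kept i"
  then obtain l where "l \<in> L" "x \<in> A l" "x \<notin> K l" "x \<in> kept i"
    by (auto simp: released_def)
  moreover from this have "x \<in> A i"
    using kept_subset by blast
  ultimately show False
    using allocation_disjoint[OF allocation, of l i x] assms L_subset
    by (auto simp: kept_def split: if_splits)
qed

lemma released_components_disjoint:
  "\<forall>i\<in>L. \<forall>j\<in>L. i \<noteq> j \<longrightarrow> (A i - K i) \<inter> (A j - K j) = {}"
  using allocation_disjoint[OF allocation] L_subset by blast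

lemma sum_released:
  fixes f :: "nat \<Rightarrow> 'a::ab_group_add"
  shows "(\<Sum>g\<in>released. f g) = (\<Sum>i\<in>L. sum f (A i) - sum f (K i))"
proof -
  have "(\<Sum>g\<in>released. f g) = (\<Sum>i\<in>L. sum f (A i - K i))"
    unfolding released_def using finite_L finite_bundle released_components_disjoint
    by (intro sum.UNION_disjoint) auto
  also have "\<dots> = (\<Sum>i\<in>L. sum f (A i) - sum f (K i))"
    using finite_bundle K_subset by (intro sum.cong refl sum_diff) (auto intro: finite_subset)
  finally show ?thesis .
qed

lemma card_released:
  "card released = (\<Sum>i\<in>L. card (A i) - card (K i))"
proof -
  have "card released = (\<Sum>i\<in>L. card (A i - K i))"
    unfolding released_def using finite_L finite_bundle released_components_disjoint
    by (intro card_UN_disjoint) auto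
  also have "\<dots> = (\<Sum>i\<in>L. card (A i) - card (K i))"
    using finite_bundle K_subset by (intro sum.cong refl card_Diff_subset) (auto intro: finite_subset)
  finally show ?thesis .
qed

end

locale reallocation = release +
  fixes \<sigma> :: "nat \<Rightarrow> nat"
  assumes \<sigma>_maps: "\<sigma> ` (\<Union>i\<in>L. A i - K i) \<subseteq> {..<n} - L"
begin

definition reallocated :: "nat \<Rightarrow> nat set" where
  "reallocated i = kept i \<union> {g\<in>released. \<sigma> g = i}"

lemma \<sigma>_released: "g \<in> released \<Longrightarrow> \<sigma> g < n \<and> \<sigma> g \<notin> L"
  using \<sigma>_maps unfolding released_def by blast

lemma reallocated_is_allocation: "is_allocation n m reallocated"
  unfolding is_allocation_def
proof (intro conjI allI impI)
  have A: "\<forall>l<n. A l \<subseteq> {..<m}" "\<forall>l<n. \<forall>l'<n. l \<noteq> l' \<longrightarrow> A l \<inter> A l' = {}"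
    "(\<Union>l<n. A l) = {..<m}"
    using allocation by (simp_all add: is_allocation_def)
  show subset: "reallocated l \<subseteq> {..<m}" if "l < n" for l
    using that kept_subset A(1) released_subset by (auto simp: reallocated_def)
  show "reallocated l \<inter> reallocated l' = {}" if "l < n" "l' < n" "l \<noteq> l'" for l l'
  proof -
    have "kept l \<inter> kept l' = {}"
      using that kept_subset A(2) by blast
    then show ?thesis
      using released_disjoint_kept that unfolding reallocated_def by blast
  qed
  have "\<exists>l<n. x \<in> reallocated l" if "x \<in> {..<m}" for x
  proof (cases "x \<in> released")
    case True
    have "x \<in> reallocated (\<sigma> x)"
      using True by (simp add: reallocated_def)
    moreover have "\<sigma> x < n"
      using \<sigma>_released[OF True] by simp
    ultimately show ?thesis
      by blast
  next
    case False
    have "x \<in> (\<Union>l<n. A l)"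
      using that A(3) by simp
    then obtain l where "x \<in> A l" "l < n"
      by blast
    then have "x \<in> reallocated l"
      using False by (cases "l \<in> L") (auto simp: released_def kept_def reallocated_def)
    then show ?thesis
      using \<open>l < n\<close> by blast
  qed
  then show "(\<Union>l<n. reallocated l) = {..<m}"
    using subset by blast
qed

lemma card_reallocated_le:
  assumes "i < n" "i \<notin> L"
  shows "card (reallocated i) \<le> card (A i) + card {g\<in>released. \<sigma> g = i}"
  using assms card_Un_le by (simp add: reallocated_def kept_def)

lemma reallocated_eq: "i \<in> L \<Longrightarrow> reallocated i = K i"
  using \<sigma>_released by (auto simp: reallocated_def kept_def)

lemma USW_reallocated:
  "USW n u reallocated = (\<Sum>i\<in>L. bundle_util u i (K i))
     + (\<Sum>i\<in>{..<n} - L. bundle_util u i (A i)) + (\<Sum>g\<in>released. u (\<sigma> g) g)"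
proof -
  have "finite released"
    using released_subset by (rule finite_subset) simp
  then have "bundle_util u l (reallocated l) =
      bundle_util u l (kept l) + (\<Sum>g\<in>{g\<in>released. \<sigma> g = l}. u l g)" if "l < n" for l
    using allocation_finite[OF allocation that] kept_subset released_disjoint_kept[OF that]
    unfolding reallocated_def bundle_util_def
    by (subst sum.union_disjoint) (auto intro: finite_subset)
  then have "USW n u reallocated = (\<Sum>l<n. bundle_util u l (kept l))
      + (\<Sum>l<n. \<Sum>g\<in>{g\<in>released. \<sigma> g = l}. u (\<sigma> g) g)"
    by (simp add: USW_def sum.distrib)
  also have "(\<Sum>l<n. \<Sum>g\<in>{g\<in>released. \<sigma> g = l}. u (\<sigma> g) g) = (\<Sum>g\<in>released. u (\<sigma> g) g)"
    using \<sigma>_released \<open>finite released\<close> by (intro sum.group) auto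
  also have "(\<Sum>l<n. bundle_util u l (kept l)) =
      (\<Sum>i\<in>L. bundle_util u i (K i)) + (\<Sum>i\<in>{..<n} - L. bundle_util u i (A i))"
  proof -
    have "(\<Sum>i\<in>L. bundle_util u i (kept i)) = (\<Sum>i\<in>L. bundle_util u i (K i))"
      "(\<Sum>i\<in>{..<n} - L. bundle_util u i (kept i)) = (\<Sum>i\<in>{..<n} - L. bundle_util u i (A i))"
      by (auto simp: kept_def intro!: sum.cong)
    then show ?thesis
      using sum.subset_diff[OF L_subset, of "\<lambda>l. bundle_util u l (kept l)"] by simp
  qed
  finally show ?thesis .
qed

end

section \<open>Cardinal allocations from a utilitarian-optimal one\<close>

locale util_optimal_instance =
  fixes n m k :: nat and u :: "nat \<Rightarrow> nat \<Rightarrow> real" and A :: "nat \<Rightarrow> nat set"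
  assumes n_pos: "0 < n" and k_pos: "0 < k" and m_le: "m \<le> k * n"
    and valid: "valid_instance n m u" and optimal: "is_util_optimal n m u A"
begin

definition overfull :: "nat set" where
  "overfull = {i. i < n \<and> k < card (A i)}"

definition within_cap :: "nat set" where
  "within_cap = {i. i < n \<and> card (A i) \<le> k}"

definition within_cap_welfare :: real where
  "within_cap_welfare = (\<Sum>i\<in>within_cap. bundle_util u i (A i))"

definition slack :: "nat \<Rightarrow> nat" where
  "slack j = k - card (A j)"

definition total_slack :: nat where
  "total_slack = (\<Sum>j\<in>within_cap. slack j)"

text \<open>The weights \<omega>(g) of the proof idea; \<^const>\<open>total_slack\<close> is positive once
  \<^const>\<open>within_cap_welfare\<close> is below 1, otherwise the division yields 0.\<close>

definition avg_value :: "nat \<Rightarrow> real" where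
  "avg_value g = (\<Sum>j\<in>within_cap. real (slack j) * u j g) / real total_slack"

lemma allocation: "is_allocation n m A"
  using optimal by (simp add: is_util_optimal_def)

lemma u_nonneg: "i < n \<Longrightarrow> g < m \<Longrightarrow> 0 \<le> u i g"
  using valid by (simp add: valid_instance_def)

lemma bundle_subset: "i < n \<Longrightarrow> A i \<subseteq> {..<m}"
  using allocation by (simp add: is_allocation_def)

lemma within_cap_eq: "within_cap = {..<n} - overfull"
  by (auto simp: within_cap_def overfull_def)

lemma overfull_subset: "overfull \<subseteq> {..<n}"
  by (auto simp: overfull_def)

lemma sum_overfull_within_cap:
  "(\<Sum>i<n. f i) = (\<Sum>i\<in>overfull. f i) + (\<Sum>i\<in>within_cap. f i)"
  using sum.subset_diff[OF overfull_subset, of f] by (simp add: within_cap_eq add.commute)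

lemma USW_eq: "USW n u A = within_cap_welfare + (\<Sum>i\<in>overfull. bundle_util u i (A i))"
  by (simp add: USW_def within_cap_welfare_def sum_overfull_within_cap)

lemma overfull_nonempty:
  assumes "within_cap_welfare < 1"
  shows "overfull \<noteq> {}"
  using util_optimal_USW_ge_1[OF valid optimal n_pos] assms by (auto simp: USW_eq)

lemma excess_le_total_slack: "(\<Sum>i\<in>overfull. card (A i) - k) \<le> total_slack"
proof -
  have "(\<Sum>i\<in>overfull. card (A i)) = (\<Sum>i\<in>overfull. (card (A i) - k) + k)"
    by (rule sum.cong) (auto simp: overfull_def)
  then have excess: "(\<Sum>i\<in>overfull. card (A i) - k) + k * card overfull = (\<Sum>i\<in>overfull. card (A i))"
    by (simp add: sum.distrib)
  have "(\<Sum>i\<in>within_cap. slack i + card (A i)) = (\<Sum>i\<in>within_cap. k)"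
    by (rule sum.cong) (auto simp: within_cap_def slack_def)
  then have slack: "total_slack + (\<Sum>i\<in>within_cap. card (A i)) = k * card within_cap"
    by (simp add: total_slack_def sum.distrib)
  have "k * card overfull + k * card within_cap = k * n"
  proof -
    have "card overfull \<le> n"
      using card_mono[OF _ overfull_subset] by simp
    then have "card overfull + card within_cap = n"
      using overfull_subset by (simp add: within_cap_eq card_Diff_subset finite_subset)
    then show ?thesis
      by (metis add_mult_distrib2)
  qed
  moreover have "(\<Sum>i\<in>overfull. card (A i)) + (\<Sum>i\<in>within_cap. card (A i)) = m"
    using allocation_sum_card[OF allocation] by (simp add: sum_overfull_within_cap)
  ultimately show ?thesis
    using excess slack m_le by linarith
qed

lemma total_slack_pos:
  assumes "within_cap_welfare < 1"
  shows "0 < total_slack"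
proof -
  obtain i where "i \<in> overfull"
    using overfull_nonempty[OF assms] by blast
  then have "0 < card (A i) - k"
    by (simp add: overfull_def)
  also have "\<dots> \<le> (\<Sum>i\<in>overfull. card (A i) - k)"
    using \<open>i \<in> overfull\<close> overfull_subset by (intro member_le_sum) (auto intro: finite_subset)
  finally show ?thesis
    using excess_le_total_slack by linarith
qed

lemma avg_value_le:
  assumes "i < n" "g \<in> A i"
  shows "avg_value g \<le> u i g"
proof -
  have "(\<Sum>j\<in>within_cap. real (slack j) * u j g) \<le> (\<Sum>j\<in>within_cap. real (slack j) * u i g)"
    using util_optimal_dominance[OF optimal assms(1) _ assms(2)]
    by (intro sum_mono mult_left_mono) (auto simp: within_cap_def)
  also have "\<dots> = real total_slack * u i g"
    by (simp add: total_slack_def sum_distrib_right)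
  finally show ?thesis
    using u_nonneg[OF assms(1)] bundle_subset[OF assms(1)] assms(2)
    by (cases "total_slack = 0") (auto simp: avg_value_def divide_le_eq mult.commute)
qed

lemma avg_value_nonneg: "g < m \<Longrightarrow> 0 \<le> avg_value g"
  unfolding avg_value_def using u_nonneg
  by (intro divide_nonneg_nonneg sum_nonneg mult_nonneg_nonneg) (auto simp: within_cap_def)

lemma sum_avg_value_overfull_ge:
  assumes "within_cap_welfare < 1"
  shows "1 - within_cap_welfare \<le> (\<Sum>i\<in>overfull. \<Sum>g\<in>A i. avg_value g)"
proof -
  have "1 - within_cap_welfare \<le> (\<Sum>i\<in>overfull. bundle_util u j (A i))" if "j \<in> within_cap" for j
  proof -
    have "(\<Sum>i\<in>within_cap. bundle_util u j (A i)) \<le> within_cap_welfare"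
      unfolding within_cap_welfare_def bundle_util_def
      using util_optimal_dominance[OF optimal] that by (intro sum_mono) (auto simp: within_cap_def)
    moreover have "(\<Sum>i<n. bundle_util u j (A i)) = 1"
      using allocation_sum_bundle_util[OF allocation] valid that
      by (simp add: valid_instance_def within_cap_def)
    ultimately show ?thesis
      by (simp add: sum_overfull_within_cap)
  qed
  then have "real total_slack * (1 - within_cap_welfare)
      \<le> (\<Sum>j\<in>within_cap. real (slack j) * (\<Sum>i\<in>overfull. bundle_util u j (A i)))"
    unfolding total_slack_def of_nat_sum sum_distrib_right by (intro sum_mono mult_left_mono) auto
  also have "\<dots> = real total_slack * (\<Sum>i\<in>overfull. \<Sum>g\<in>A i. avg_value g)"
    using total_slack_pos[OF assms]
    by (simp add: avg_value_def bundle_util_def sum_distrib_left sum_divide_distrib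
        sum.swap[of _ within_cap])
  finally show ?thesis
    using total_slack_pos[OF assms] by simp
qed

lemma card_overfull_le:
  assumes "within_cap_welfare < 1"
  shows "(\<Sum>i\<in>overfull. real (card (A i))) - (real k + 1) * (1 - within_cap_welfare) \<le> real m - 1"
proof -
  have sum_card: "(\<Sum>i\<in>overfull. card (A i)) + (\<Sum>i\<in>within_cap. card (A i)) = m"
    using allocation_sum_card[OF allocation] sum_overfull_within_cap[of "\<lambda>i. card (A i)"] by simp
  show ?thesis
  proof (cases "\<exists>j\<in>within_cap. A j \<noteq> {}")
    case True
    then obtain j where "j \<in> within_cap" "A j \<noteq> {}"
      by blast
    then have "1 \<le> card (A j)"
      using allocation_finite[OF allocation] by (auto simp: within_cap_def Suc_le_eq card_gt_0_iff)
    also have "card (A j) \<le> (\<Sum>i\<in>within_cap. card (A i))"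
      using \<open>j \<in> within_cap\<close> by (intro member_le_sum) (simp_all add: within_cap_def)
    finally have "real (\<Sum>i\<in>overfull. card (A i)) \<le> real m - 1"
      using sum_card by linarith
    moreover have "0 \<le> (real k + 1) * (1 - within_cap_welfare)"
      using assms by simp
    ultimately show ?thesis
      by simp
  next
    case False
    then have "within_cap_welfare = 0"
      by (simp add: within_cap_welfare_def bundle_util_def)
    moreover have "real (\<Sum>i\<in>overfull. card (A i)) \<le> real m"
      using sum_card by linarith
    ultimately show ?thesis
      by simp
  qed
qed

lemma exists_best_k_subsets:
  "\<exists>K. \<forall>i\<in>overfull. K i \<subseteq> A i \<and> card (K i) = k \<and>
     real k / real (card (A i)) * (bundle_util u i (A i) - sum avg_value (A i))
       \<le> bundle_util u i (K i) - sum avg_value (K i)"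
proof (intro bchoice ballI)
  fix i assume "i \<in> overfull"
  then obtain K where "K \<subseteq> A i" "card K = k"
    "real k / real (card (A i)) * (\<Sum>g\<in>A i. u i g - avg_value g) \<le> (\<Sum>g\<in>K. u i g - avg_value g)"
    using ex_subset_card_sum_ge_average[of "A i" k "\<lambda>g. u i g - avg_value g"]
      allocation_finite[OF allocation] k_pos by (auto simp: overfull_def)
  then show "\<exists>K. K \<subseteq> A i \<and> card K = k \<and>
     real k / real (card (A i)) * (bundle_util u i (A i) - sum avg_value (A i))
       \<le> bundle_util u i K - sum avg_value K"
    by (auto simp: bundle_util_def sum_subtractf)
qed

lemma exists_routing:
  assumes "finite E" "card E \<le> total_slack" "0 < total_slack"
  shows "\<exists>\<sigma>. \<sigma> ` E \<subseteq> within_cap \<and> (\<forall>j\<in>within_cap. card {g\<in>E. \<sigma> g = j} \<le> slack j) \<and>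
    sum avg_value E \<le> (\<Sum>g\<in>E. u (\<sigma> g) g)"
proof -
  obtain \<sigma> where \<sigma>: "\<sigma> ` E \<subseteq> within_cap" "\<forall>j\<in>within_cap. card {g\<in>E. \<sigma> g = j} \<le> slack j"
    and \<sigma>_ge: "(\<Sum>j\<in>within_cap. real (slack j) * (\<Sum>g\<in>E. u j g))
      \<le> real total_slack * (\<Sum>g\<in>E. u (\<sigma> g) g)"
    using ex_capacitated_assignment_ge_average[of E within_cap slack u] assms(1,2)
    by (auto simp: total_slack_def within_cap_def)
  have "sum avg_value E = (\<Sum>j\<in>within_cap. real (slack j) * (\<Sum>g\<in>E. u j g)) / real total_slack"
    by (simp add: avg_value_def sum_divide_distrib[symmetric] sum_distrib_left sum.swap[of _ within_cap])
  then show ?thesis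
    using \<sigma> \<sigma>_ge assms(3) by (auto simp: pos_divide_le_eq mult.commute)
qed

lemma exists_cardinal_reallocation:
  assumes "within_cap_welfare < 1"
    and K: "\<And>i. i \<in> overfull \<Longrightarrow> K i \<subseteq> A i \<and> card (K i) = k"
  shows "\<exists>B. is_cardinal n m k B \<and> within_cap_welfare + (\<Sum>i\<in>overfull. bundle_util u i (K i)
      + (sum avg_value (A i) - sum avg_value (K i))) \<le> USW n u B"
proof -
  interpret rel: release n m A K overfull
    using allocation overfull_subset K by unfold_locales auto
  have "card rel.released \<le> total_slack"
    using rel.card_released K excess_le_total_slack by simp
  then obtain \<sigma> where \<sigma>: "\<sigma> ` rel.released \<subseteq> within_cap"
      "\<forall>j\<in>within_cap. card {g\<in>rel.released. \<sigma> g = j} \<le> slack j"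
    and \<sigma>_ge: "sum avg_value rel.released \<le> (\<Sum>g\<in>rel.released. u (\<sigma> g) g)"
    using exists_routing[of rel.released] total_slack_pos[OF assms(1)]
      rel.released_subset finite_subset by blast
  interpret r: reallocation n m A K overfull \<sigma>
    using \<sigma>(1) by unfold_locales (auto simp: rel.released_def within_cap_eq)
  have "card (r.reallocated i) \<le> k" if "i < n" for i
  proof (cases "i \<in> overfull")
    case True
    then show ?thesis using K by (simp add: r.reallocated_eq)
  next
    case False
    then have "i \<in> within_cap"
      using that by (simp add: within_cap_eq)
    then show ?thesis
      using r.card_reallocated_le[OF that False] \<sigma>(2) by (fastforce simp: slack_def within_cap_def)
  qed
  then have "is_cardinal n m k r.reallocated"
    using r.reallocated_is_allocation by (simp add: is_cardinal_def)
  moreover have "within_cap_welfare + (\<Sum>i\<in>overfull. bundle_util u i (K i)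
      + (sum avg_value (A i) - sum avg_value (K i))) \<le> USW n u r.reallocated"
    using \<sigma>_ge by (simp add: r.USW_reallocated rel.sum_released sum.distrib within_cap_welfare_def within_cap_eq)
  ultimately show ?thesis
    by blast
qed

lemma overfull_bounds:
  assumes "i \<in> overfull"
  shows "0 \<le> sum avg_value (A i) \<and> sum avg_value (A i) \<le> bundle_util u i (A i) \<and>
    bundle_util u i (A i) \<le> 1 \<and> real k + 1 \<le> real (card (A i))"
proof (intro conjI)
  have i: "i < n" "k < card (A i)"
    using assms by (simp_all add: overfull_def)
  show "0 \<le> sum avg_value (A i)"
    using avg_value_nonneg bundle_subset[OF i(1)] by (auto intro: sum_nonneg)
  show "sum avg_value (A i) \<le> bundle_util u i (A i)"
    unfolding bundle_util_def using avg_value_le[OF i(1)] by (rule sum_mono)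
  have "bundle_util u i (A i) \<le> bundle_util u i {..<m}"
    unfolding bundle_util_def using u_nonneg[OF i(1)] bundle_subset[OF i(1)]
    by (intro sum_mono2) auto
  then show "bundle_util u i (A i) \<le> 1"
    using valid i(1) by (simp add: valid_instance_def)
  show "real k + 1 \<le> real (card (A i))"
    using i(2) by simp
qed

lemma one_less_m:
  assumes "within_cap_welfare < 1"
  shows "1 < m"
proof -
  obtain i where "i \<in> overfull"
    using overfull_nonempty[OF assms] by blast
  then have "k < card (A i)" "card (A i) \<le> m"
    using bundle_subset card_mono[of "{..<m}"] by (auto simp: overfull_def)
  then show ?thesis
    using k_pos by simp
qed

lemma MAX_CARD_USW_ge:
  assumes "within_cap_welfare < 1"
  shows "1 + real k * (OPT_USW n m u - 1)\<^sup>2 / (real m - 1) \<le> MAX_CARD_USW n m k u"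
proof -
  define v where "v i = bundle_util u i (A i)" for i
  obtain K where K: "\<forall>i\<in>overfull. K i \<subseteq> A i \<and> card (K i) = k \<and>
     real k / real (card (A i)) * (v i - sum avg_value (A i)) \<le> bundle_util u i (K i) - sum avg_value (K i)"
    using exists_best_k_subsets unfolding v_def by blast
  obtain B where "is_cardinal n m k B" and B: "within_cap_welfare + (\<Sum>i\<in>overfull. bundle_util u i (K i)
      + (sum avg_value (A i) - sum avg_value (K i))) \<le> USW n u B"
    using exists_cardinal_reallocation[OF assms] K by blast
  have "1 + real k * (within_cap_welfare + (\<Sum>i\<in>overfull. v i) - 1)\<^sup>2 / (real m - 1)
      \<le> within_cap_welfare + (\<Sum>i\<in>overfull. sum avg_value (A i)
        + real k / real (card (A i)) * (v i - sum avg_value (A i)))"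
    using truncated_welfare_ge[OF assms _ _ sum_avg_value_overfull_ge[OF assms] card_overfull_le[OF assms]]
      k_pos overfull_bounds one_less_m[OF assms] by (simp add: v_def)
  also have "\<dots> \<le> within_cap_welfare + (\<Sum>i\<in>overfull. bundle_util u i (K i)
      + (sum avg_value (A i) - sum avg_value (K i)))"
    using K by (auto intro: sum_mono)
  also have "\<dots> \<le> USW n u B"
    by (rule B)
  also have "\<dots> \<le> MAX_CARD_USW n m k u"
    by (rule USW_le_MAX_CARD_USW[OF \<open>is_cardinal n m k B\<close>])
  finally show ?thesis
    using OPT_USW_eq[OF optimal] by (simp add: USW_eq v_def)
qed

end

theorem lemma5:
  fixes n m k :: nat and u :: "nat \<Rightarrow> nat \<Rightarrow> real" and Astar :: "nat \<Rightarrow> nat set"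
  assumes "0 < n" "0 < k" "k < m" "m \<le> k * n"
    and "valid_instance n m u"
    and "is_util_optimal n m u Astar"
    and "(\<Sum>i\<in>{i. i < n \<and> card (Astar i) < k} \<union> {i. i < n \<and> card (Astar i) = k}.
            bundle_util u i (Astar i)) < 1"
  shows "OPT_USW n m u / MAX_CARD_USW n m k u
         \<le> (let s = -1 + sqrt (1 + (real m - 1) / real k)
            in (1 + s) / (1 + real k * s\<^sup>2 / (real m - 1)))"
proof -
  interpret util_optimal_instance n m k u Astar
    using assms by unfold_locales
  have "{i. i < n \<and> card (Astar i) < k} \<union> {i. i < n \<and> card (Astar i) = k} = within_cap"
    by (auto simp: within_cap_def)
  then have "within_cap_welfare < 1"
    using assms(7) by (simp add: within_cap_welfare_def)
  moreover have "0 \<le> 1 + (OPT_USW n m u - 1)"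
    using OPT_USW_eq[OF optimal] util_optimal_USW_ge_1[OF valid optimal n_pos] by simp
  ultimately show ?thesis
    using ratio_le_sqrt_bound[of "real k" "real m - 1" "OPT_USW n m u - 1" "MAX_CARD_USW n m k u"]
      MAX_CARD_USW_ge assms(2,3) by simp
qed

end
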